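(* Let $X=X_F\uplus X_H$ be a set of $n\ge1$ clocks, $M\in\mathbb{N}$, and let $v_1,v_2$ be valuations with $v_1\sim_M v_2$. Let $L=\{x\in X\mid -M\le v_1(x)\}$. Then there is a valuation $v_2'$ such that $v_2'\!\downarrow_L=v_2\!\downarrow_L$ and $v_1\approx_M v_2'$.
   Context: $X_F$ are future clocks, $X_H$ history clocks. $\overline{\mathbb{R}}=\mathbb{R}\cup\{\pm\infty\}$ with $(+\infty)+\alpha=+\infty$, $(-\infty)+\beta=-\infty$ for $\beta\ne+\infty$, $-(\pm\infty)=\mp\infty$. A valuation $v:X\cup\{0\}\to\overline{\mathbb{R}}$ has $v(0)=0$, $v(x)\in\mathbb{R}_{\ge0}\cup\{+\infty\}$ for $x\in X_H$, $v(x)\in\mathbb{R}_{\le0}\cup\{-\infty\}$ for $x\in X_F$; $v\!\downarrow_L$ is the restriction of $v$ to $L$; $v\models x-y\triangleleft c$ iff $v(x)-v(y)\triangleleft c$. For $\alpha\in\mathbb{R}$, $\{\alpha\}=\alpha-\lfloor\alpha\rfloor$. $\sim$: for $K\in\mathbb{N}$, $\alpha\sim_K\beta$ iff $\alpha\triangleleft c\iff\beta\triangleleft c$ for all ${\triangleleft}\in\{<,\le\}$ and $c\in\{\pm\infty\}$ or $c\in\mathbb{Z}$ with $|c|\le K$; $v_1\sim_M v_2$ iff $v_1(x)\sim_{nM}v_2(x)$ for all $x\in X$ and $v_1(x)-v_1(y)\sim_{(n+1)M}v_2(x)-v_2(y)$ for all $x,y\in X$, with $n=|X|$. $\approx$: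 $v_1\approx_M v_2$ iff for all clocks $x,y$: (1) $v_1(x)\triangleleft c\iff v_2(x)\triangleleft c$ for ${\triangleleft}\in\{<,\le\}$ and $c\in\{\pm\infty\}$ or $c\in\mathbb{Z}$ with $c\le M$; (2) $v_1\models x-y\triangleleft c\iff v_2\models x-y\triangleleft c$ for ${\triangleleft}\in\{<,\le\}$ and $c\in\{\pm\infty\}$ or $c\in\mathbb{Z}$ with $|c|\le M$; (3) if $-\infty<v_1(x),v_1(y)\le M$ then $\{v_1(x)\}\le\{v_1(y)\}\iff\{v_2(x)\}\le\{v_2(y)\}$. *)

theory Defs
  imports "HOL-Library.Extended_Real"
begin

text \<open>Extended reals: Isabelle's ereal has exactly the paper's conventions
  (infinity + a = infinity, -infinity + b = -infinity for b not +infinity,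
  x - y = x + (-y)).  A valuation on clocks of type 'c is a function
  'c => ereal; the special clock 0 is implicit (always value 0).\<close>

definition is_valuation :: "'c set \<Rightarrow> 'c set \<Rightarrow> ('c \<Rightarrow> ereal) \<Rightarrow> bool" where
  "is_valuation XF XH v \<longleftrightarrow> (\<forall>x\<in>XH. 0 \<le> v x) \<and> (\<forall>x\<in>XF. v x \<le> 0)"

definition sim_K :: "nat \<Rightarrow> ereal \<Rightarrow> ereal \<Rightarrow> bool" where
  "sim_K K a b \<longleftrightarrow>
     (\<forall>c::ereal. (c = \<infinity> \<or> c = -\<infinity> \<or> (\<exists>k::int. c = ereal (of_int k) \<and> \<bar>k\<bar> \<le> int K)) \<longrightarrow>
        ((a < c \<longleftrightarrow> b < c) \<and> (a \<le> c \<longleftrightarrow> b \<le> c)))"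

definition sim_val :: "'c set \<Rightarrow> nat \<Rightarrow> ('c \<Rightarrow> ereal) \<Rightarrow> ('c \<Rightarrow> ereal) \<Rightarrow> bool" where
  "sim_val X M v1 v2 \<longleftrightarrow>
     (\<forall>x\<in>X. sim_K (card X * M) (v1 x) (v2 x)) \<and>
     (\<forall>x\<in>X. \<forall>y\<in>X. sim_K ((card X + 1) * M) (v1 x - v1 y) (v2 x - v2 y))"

definition efrac :: "ereal \<Rightarrow> real" where
  "efrac a = frac (real_of_ereal a)"

definition approx_val :: "'c set \<Rightarrow> nat \<Rightarrow> ('c \<Rightarrow> ereal) \<Rightarrow> ('c \<Rightarrow> ereal) \<Rightarrow> bool" where
  "approx_val X M v1 v2 \<longleftrightarrow>
     (\<forall>x\<in>X.
        (\<forall>c::ereal. (c = \<infinity> \<or> c = -\<infinity> \<or> (\<exists>k::int. c = ereal (of_int k) \<and> k \<le> int M)) \<longrightarrow>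
           ((v1 x < c \<longleftrightarrow> v2 x < c) \<and> (v1 x \<le> c \<longleftrightarrow> v2 x \<le> c)))) \<and>
     (\<forall>x\<in>X. \<forall>y\<in>X.
        (\<forall>c::ereal. (c = \<infinity> \<or> c = -\<infinity> \<or> (\<exists>k::int. c = ereal (of_int k) \<and> \<bar>k\<bar> \<le> int M)) \<longrightarrow>
           ((v1 x - v1 y < c \<longleftrightarrow> v2 x - v2 y < c) \<and> (v1 x - v1 y \<le> c \<longleftrightarrow> v2 x - v2 y \<le> c)))) \<and>
     (\<forall>x\<in>X. \<forall>y\<in>X.
        (-\<infinity> < v1 x \<and> v1 x \<le> ereal (real M) \<and> -\<infinity> < v1 y \<and> v1 y \<le> ereal (real M)) \<longrightarrow>
           (efrac (v1 x) \<le> efrac (v1 y) \<longleftrightarrow> efrac (v2 x) \<le> efrac (v2 y)))"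

end

theory Submission
  imports Defs
begin

(*
  On the clocks whose v1-value lies in [-M, M] the relation v1 ~ v2 compares values with integers
  up to n M >= M and differences with integers up to (n + 1) M >= 2 M.  This forces v2 to have
  the same integer parts, the same integral clocks and the same order of fractional parts as v1
  there: v1 and v2 are region equivalent on these clocks.

  Only the clocks with finite v1-value below -M can violate v1 ~~_M v2.  There we redefine v2,
  keeping the integer part of v1 and choosing the fractional parts through a strictly monotone
  self-map of [0, 1) that extends the correspondence between fractional parts of v1 and v2
  already fixed on the bounded clocks (it exists by density of the reals).  Region equivalence
  decides every comparison of a value or a difference with an integer; the remaining pairs of
  clocks lie more than M apart, or involve infinite values, which ~ already preserves.
*)

lemma strict_mono_on_extend_insert:
  fixes f :: "'a::linorder \<Rightarrow> 'b::dense_linorder"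
  assumes "finite A" "a\<^sub>0 \<in> A" "a\<^sub>0 \<le> t" "strict_mono_on A f" "f ` A \<subseteq> {..<h}"
  shows "\<exists>g. strict_mono_on (insert t A) g \<and> (\<forall>a\<in>A. g a = f a) \<and> g ` insert t A \<subseteq> {..<h}"
proof (cases "t \<in> A")
  case True
  then show ?thesis using assms by (intro exI[of _ f]) (auto simp: insert_absorb)
next
  case False
  define below where "below = {a\<in>A. a < t}"
  define above where "above = {a\<in>A. t < a}"
  define lo where "lo = Max below"
  define hi where "hi = (if above = {} then h else f (Min above))"
  have below: "finite below" "below \<noteq> {}"
    using assms False unfolding below_def by (auto simp: order.order_iff_strict)
  have lo: "lo \<in> A" "lo < t"
    using Max_in[OF below] unfolding lo_def below_def by auto
  have f_below: "f a \<le> f lo" if "a \<in> A" "a < t" for a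
    using Max_ge[OF below(1)] that lo(1) assms(4) strict_mono_on_less_eq
    unfolding lo_def below_def by blast
  have f_above: "hi \<le> f a" if "a \<in> A" "t < a" for a
  proof -
    have "finite above" "a \<in> above" using assms(1) that unfolding above_def by auto
    then have "Min above \<le> a" "Min above \<in> A" "hi = f (Min above)"
      using Min_le Min_in[of above] unfolding hi_def above_def by auto
    then show ?thesis using that(1) assms(4) strict_mono_on_less_eq by metis
  qed
  have hi: "f lo < hi \<and> hi \<le> h"
  proof (cases "above = {}")
    case True
    then show ?thesis using assms(5) lo(1) unfolding hi_def by auto
  next
    case False
    then have "Min above \<in> A" "lo < Min above"
      using Min_in[of above] assms(1) lo(2) unfolding above_def by auto
    then show ?thesis
      using False lo(1) assms(4,5) unfolding hi_def by (auto simp: strict_mono_onD less_imp_le)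
  qed
  then obtain v where v: "f lo < v" "v < h" "v < hi" using dense by force
  define g where "g = f(t := v)"
  have "strict_mono_on (insert t A) g"
  proof (rule strict_mono_onI)
    fix a b assume ab: "a \<in> insert t A" "b \<in> insert t A" "a < b"
    consider "a = t" "b \<in> A" | "b = t" "a \<in> A" | "a \<in> A" "b \<in> A"
      using ab by auto
    then show "g a < g b"
    proof cases
      case 1
      then have "v < f b" using f_above[of b] ab(3) v(3) by simp
      then show ?thesis using 1 False unfolding g_def by auto
    next
      case 2
      then have "f a < v" using f_below[of a] ab(3) v(1) by simp
      then show ?thesis using 2 False unfolding g_def by auto
    next
      case 3
      then show ?thesis using ab(3) False assms(4) unfolding g_def by (auto dest: strict_mono_onD)
    qed
  qed
  moreover have "g ` insert t A \<subseteq> {..<h}"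
    using assms(5) v unfolding g_def by auto
  ultimately show ?thesis using False by (intro exI[of _ g]) (auto simp: g_def)
qed

lemma strict_mono_on_extend:
  fixes f :: "'a::linorder \<Rightarrow> 'b::dense_linorder"
  assumes "finite A" "finite B" "a\<^sub>0 \<in> A" "\<forall>b\<in>B. a\<^sub>0 \<le> b" "strict_mono_on A f" "f ` A \<subseteq> {..<h}"
  shows "\<exists>g. strict_mono_on (A \<union> B) g \<and> (\<forall>a\<in>A. g a = f a) \<and> g ` (A \<union> B) \<subseteq> {..<h}"
  using assms(2,4)
proof (induction B rule: finite_induct)
  case empty
  then show ?case using assms by (intro exI[of _ f]) auto
next
  case (insert t B)
  then obtain g where g: "strict_mono_on (A \<union> B) g" "\<forall>a\<in>A. g a = f a" "g ` (A \<union> B) \<subseteq> {..<h}"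
    by auto
  obtain g' where "strict_mono_on (insert t (A \<union> B)) g'" "\<forall>a\<in>A \<union> B. g' a = g a"
    "g' ` insert t (A \<union> B) \<subseteq> {..<h}"
    using strict_mono_on_extend_insert[OF _ _ _ g(1,3), of a\<^sub>0 t] assms(1,3) insert by auto
  then show ?case using g(2) by (intro exI[of _ g']) auto
qed

lemma le_of_int_iff_floor_frac:
  fixes a :: real
  shows "a \<le> of_int k \<longleftrightarrow> \<lfloor>a\<rfloor> < k \<or> \<lfloor>a\<rfloor> = k \<and> frac a = 0"
  by (smt (verit, best) floor_eq_iff floor_less_iff frac_def)

lemma diff_cmp_of_int_iff_floor_frac:
  fixes a b :: real
  shows "a - b < of_int k \<longleftrightarrow> \<lfloor>a\<rfloor> - \<lfloor>b\<rfloor> < k \<or> \<lfloor>a\<rfloor> - \<lfloor>b\<rfloor> = k \<and> frac a < frac b"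
    and "a - b \<le> of_int k \<longleftrightarrow> \<lfloor>a\<rfloor> - \<lfloor>b\<rfloor> < k \<or> \<lfloor>a\<rfloor> - \<lfloor>b\<rfloor> = k \<and> frac a \<le> frac b"
proof -
  have "a - b = of_int (\<lfloor>a\<rfloor> - \<lfloor>b\<rfloor>) + (frac a - frac b)"
    by (simp add: frac_def)
  moreover have "\<bar>frac a - frac b\<bar> < 1"
    using frac_lt_1[of a] frac_lt_1[of b] frac_ge_0[of a] frac_ge_0[of b] by linarith
  moreover have "d < k \<longleftrightarrow> d + 1 \<le> k" for d :: int by linarith
  ultimately show "a - b < of_int k \<longleftrightarrow> \<lfloor>a\<rfloor> - \<lfloor>b\<rfloor> < k \<or> \<lfloor>a\<rfloor> - \<lfloor>b\<rfloor> = k \<and> frac a < frac b"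
    and "a - b \<le> of_int k \<longleftrightarrow> \<lfloor>a\<rfloor> - \<lfloor>b\<rfloor> < k \<or> \<lfloor>a\<rfloor> - \<lfloor>b\<rfloor> = k \<and> frac a \<le> frac b"
    by (smt (verit) of_int_add of_int_le_iff of_int_less_iff of_int_1)+
qed

lemma diff_le_floor_diff_iff:
  fixes a b :: real
  shows "a - b \<le> of_int (\<lfloor>a\<rfloor> - \<lfloor>b\<rfloor>) \<longleftrightarrow> frac a \<le> frac b"
  unfolding frac_def by linarith

lemma floor_frac_eq_if_bounded_cuts:
  fixes a b :: real
  assumes "\<bar>a\<bar> \<le> real M" "M \<le> N"
    and "\<And>k. \<bar>k\<bar> \<le> int N \<Longrightarrow> (a < of_int k \<longleftrightarrow> b < of_int k) \<and> (a \<le> of_int k \<longleftrightarrow> b \<le> of_int k)"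
  shows "\<lfloor>a\<rfloor> = \<lfloor>b\<rfloor> \<and> (frac a = 0 \<longleftrightarrow> frac b = 0)"
proof -
  define k where "k = \<lfloor>a\<rfloor>"
  have k: "of_int k \<le> a" "a < of_int k + 1" "\<bar>k\<bar> \<le> int M"
    using assms(1) unfolding k_def by linarith+
  have "of_int k \<le> b"
    using assms(2) assms(3)[of k] k by auto
  moreover have "b < of_int k + 1"
  proof (cases "k = int M")
    case True
    \<comment> \<open>the cut at k + 1 may be out of range; then a = M and the cut at M pins b down\<close>
    then show ?thesis using assms(1,2) assms(3)[of k] k by auto
  next
    case False
    then show ?thesis using assms(2) assms(3)[of "k + 1"] k by auto
  qed
  ultimately have "\<lfloor>b\<rfloor> = k" by linarith
  moreover have "a \<le> of_int k \<longleftrightarrow> b \<le> of_int k"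
    using assms(2) assms(3)[of k] k by auto
  ultimately show ?thesis
    using le_of_int_iff_floor_frac[of a k] le_of_int_iff_floor_frac[of b k] k_def by auto
qed

text \<open>Region equivalence in the sense of Alur and Dill, without the cut-off at a maximal constant.\<close>

definition region_equiv :: "'c set \<Rightarrow> ('c \<Rightarrow> real) \<Rightarrow> ('c \<Rightarrow> real) \<Rightarrow> bool" where
  "region_equiv G r s \<longleftrightarrow>
     (\<forall>x\<in>G. \<lfloor>r x\<rfloor> = \<lfloor>s x\<rfloor> \<and> (frac (r x) = 0 \<longleftrightarrow> frac (s x) = 0)) \<and>
     (\<forall>x\<in>G. \<forall>y\<in>G. frac (r x) \<le> frac (r y) \<longleftrightarrow> frac (s x) \<le> frac (s y))"

lemma region_equiv_cuts:
  assumes "region_equiv G r s" "x \<in> G"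
  shows "(r x < of_int k \<longleftrightarrow> s x < of_int k) \<and> (r x \<le> of_int k \<longleftrightarrow> s x \<le> of_int k)"
  using assms le_of_int_iff_floor_frac[of "r x" k] le_of_int_iff_floor_frac[of "s x" k]
  unfolding region_equiv_def by (auto simp flip: floor_less_iff)

lemma region_equiv_diff_cuts:
  assumes "region_equiv G r s" "x \<in> G" "y \<in> G"
  shows "(r x - r y < of_int k \<longleftrightarrow> s x - s y < of_int k) \<and>
         (r x - r y \<le> of_int k \<longleftrightarrow> s x - s y \<le> of_int k)"
  using assms diff_cmp_of_int_iff_floor_frac[of "r x" "r y" k] diff_cmp_of_int_iff_floor_frac[of "s x" "s y" k]
  unfolding region_equiv_def by (auto simp flip: not_le)

lemma region_equiv_if_bounded_cuts:
  fixes r s :: "'c \<Rightarrow> real"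
  assumes "\<forall>x\<in>F. \<bar>r x\<bar> \<le> real M" "M \<le> N" "2 * M \<le> N'"
    and "\<forall>x\<in>F. \<forall>k. \<bar>k\<bar> \<le> int N \<longrightarrow>
           (r x < of_int k \<longleftrightarrow> s x < of_int k) \<and> (r x \<le> of_int k \<longleftrightarrow> s x \<le> of_int k)"
    and "\<forall>x\<in>F. \<forall>y\<in>F. \<forall>k. \<bar>k\<bar> \<le> int N' \<longrightarrow> (r x - r y \<le> of_int k \<longleftrightarrow> s x - s y \<le> of_int k)"
  shows "region_equiv F r s"
proof -
  have floors: "\<lfloor>r x\<rfloor> = \<lfloor>s x\<rfloor> \<and> (frac (r x) = 0 \<longleftrightarrow> frac (s x) = 0)" if "x \<in> F" for x
    using floor_frac_eq_if_bounded_cuts[OF _ assms(2)] assms(1,4) that by blast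
  have "frac (r x) \<le> frac (r y) \<longleftrightarrow> frac (s x) \<le> frac (s y)" if "x \<in> F" "y \<in> F" for x y
  proof -
    have "- int M \<le> \<lfloor>r z\<rfloor> \<and> \<lfloor>r z\<rfloor> \<le> int M" if "z \<in> F" for z
      using assms(1) that by (force simp: le_floor_iff floor_le_iff abs_le_iff)
    from this[OF that(1)] this[OF that(2)] have "\<bar>\<lfloor>r x\<rfloor> - \<lfloor>r y\<rfloor>\<bar> \<le> int N'"
      using assms(3) by linarith
    then show ?thesis
      using assms(5) that floors[OF that(1)] floors[OF that(2)] diff_le_floor_diff_iff by metis
  qed
  then show ?thesis using floors unfolding region_equiv_def by blast
qed

lemma region_equiv_frac_map:
  assumes "region_equiv F r s"
  shows "\<exists>\<phi>. strict_mono_on (insert 0 ((\<lambda>x. frac (r x)) ` F)) \<phi> \<and> \<phi> 0 = 0 \<and>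
           (\<forall>x\<in>F. \<phi> (frac (r x)) = frac (s x))"
proof -
  define \<phi> where "\<phi> = (\<lambda>t. frac (s (inv_into F (\<lambda>x. frac (r x)) t)))(0 := 0)"
  have order: "frac (r x) \<le> frac (r y) \<longleftrightarrow> frac (s x) \<le> frac (s y)" if "x \<in> F" "y \<in> F" for x y
    using assms that unfolding region_equiv_def by blast
  have frac_eq: "frac (s x) = frac (s y)" if "x \<in> F" "y \<in> F" "frac (r x) = frac (r y)" for x y
    using order[of x y] order[of y x] that by simp
  have \<phi>_frac: "\<phi> (frac (r x)) = frac (s x)" if "x \<in> F" for x
  proof (cases "frac (r x) = 0")
    case True
    then show ?thesis using assms that unfolding region_equiv_def \<phi>_def by simp
  next
    case False
    define x' where "x' = inv_into F (\<lambda>x. frac (r x)) (frac (r x))"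
    have "frac (r x) \<in> (\<lambda>x. frac (r x)) ` F" using that by blast
    then have "x' \<in> F" "frac (r x') = frac (r x)"
      unfolding x'_def by (auto intro: inv_into_into f_inv_into_f)
    then show ?thesis
      using frac_eq[of x' x] that False unfolding \<phi>_def by (simp flip: x'_def)
  qed
  have "strict_mono_on (insert 0 ((\<lambda>x. frac (r x)) ` F)) \<phi>"
  proof (rule strict_mono_onI)
    fix a b
    assume a: "a \<in> insert 0 ((\<lambda>x. frac (r x)) ` F)" and b: "b \<in> insert 0 ((\<lambda>x. frac (r x)) ` F)"
      and "a < b"
    moreover have "0 \<le> a" using a by auto
    ultimately have "b \<noteq> 0" by simp
    then obtain y where y: "y \<in> F" "b = frac (r y)" using b by auto
    show "\<phi> a < \<phi> b"
    proof (cases "a = 0")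
      case True
      have "frac (s y) \<noteq> 0" using assms y \<open>b \<noteq> 0\<close> unfolding region_equiv_def by blast
      then show ?thesis using True y \<phi>_frac[of y] unfolding \<phi>_def
        by (simp add: order.not_eq_order_implies_strict)
    next
      case False
      then obtain x where x: "x \<in> F" "a = frac (r x)" using a by auto
      then have "\<not> frac (s y) \<le> frac (s x)" using order[OF y(1) x(1)] \<open>a < b\<close> y(2) by simp
      then show ?thesis using x y \<phi>_frac by simp
    qed
  qed
  then show ?thesis using \<phi>_frac unfolding \<phi>_def by auto
qed

lemma region_equiv_extend:
  fixes r s :: "'c \<Rightarrow> real"
  assumes "finite G" "F \<subseteq> G" "region_equiv F r s"
  shows "\<exists>q. region_equiv G r q \<and> (\<forall>x\<in>F. q x = s x)"
proof -
  define A where "A = insert 0 ((\<lambda>x. frac (r x)) ` F)"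
  define D where "D = A \<union> (\<lambda>x. frac (r x)) ` G"
  obtain \<phi> where \<phi>: "strict_mono_on A \<phi>" "\<phi> 0 = 0" "\<forall>x\<in>F. \<phi> (frac (r x)) = frac (s x)"
    using region_equiv_frac_map[OF assms(3)] unfolding A_def by blast
  moreover have "finite A" "\<phi> ` A \<subseteq> {..<1}"
    using \<phi>(2,3) finite_subset[OF assms(2,1)] unfolding A_def by (auto simp: frac_lt_1)
  ultimately obtain \<psi> where \<psi>: "strict_mono_on D \<psi>" "\<forall>a\<in>A. \<psi> a = \<phi> a" "\<psi> ` D \<subseteq> {..<1}"
    using strict_mono_on_extend[of A "(\<lambda>x. frac (r x)) ` G" 0 \<phi> 1] assms(1)
    unfolding A_def D_def by auto
  have "0 \<in> D" "\<psi> 0 = 0" using \<phi>(2) \<psi>(2) unfolding D_def A_def by auto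
  have D: "frac (r x) \<in> D" if "x \<in> G" for x using that unfolding D_def by blast
  have \<psi>_frac: "0 \<le> \<psi> (frac (r x)) \<and> \<psi> (frac (r x)) < 1 \<and> (\<psi> (frac (r x)) = 0 \<longleftrightarrow> frac (r x) = 0)"
    if "x \<in> G" for x
    using strict_mono_on_less_eq[OF \<psi>(1) \<open>0 \<in> D\<close> D[OF that]] strict_mono_on_eq[OF \<psi>(1) \<open>0 \<in> D\<close> D[OF that]]
      \<psi>(3) D[OF that] \<open>\<psi> 0 = 0\<close> by auto
  define q where "q x = of_int \<lfloor>r x\<rfloor> + \<psi> (frac (r x))" for x
  have q: "\<lfloor>q x\<rfloor> = \<lfloor>r x\<rfloor> \<and> frac (q x) = \<psi> (frac (r x))" if "x \<in> G" for x
    using \<psi>_frac[OF that] unfolding q_def by (simp add: floor_eq_iff frac_def)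
  have "region_equiv G r q"
    unfolding region_equiv_def using q \<psi>_frac strict_mono_on_less_eq[OF \<psi>(1) D D] by auto
  moreover have "q x = s x" if "x \<in> F" for x
  proof -
    have "\<psi> (frac (r x)) = frac (s x)" using \<phi>(3) \<psi>(2) that unfolding A_def by auto
    moreover have "\<lfloor>r x\<rfloor> = \<lfloor>s x\<rfloor>" using assms(3) that unfolding region_equiv_def by blast
    ultimately show ?thesis unfolding q_def frac_def by simp
  qed
  ultimately show ?thesis by blast
qed

definition cuts_agree :: "(int \<Rightarrow> bool) \<Rightarrow> ereal \<Rightarrow> ereal \<Rightarrow> bool" where
  "cuts_agree P a b \<longleftrightarrow>
     (\<forall>c. (c = \<infinity> \<or> c = -\<infinity> \<or> (\<exists>k. c = ereal (of_int k) \<and> P k)) \<longrightarrow>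
        (a < c \<longleftrightarrow> b < c) \<and> (a \<le> c \<longleftrightarrow> b \<le> c))"

lemma sim_K_iff_cuts_agree: "sim_K K a b \<longleftrightarrow> cuts_agree (\<lambda>k. \<bar>k\<bar> \<le> int K) a b"
  unfolding sim_K_def cuts_agree_def ..

lemma approx_val_iff_cuts_agree:
  "approx_val X M v1 v2 \<longleftrightarrow>
     (\<forall>x\<in>X. cuts_agree (\<lambda>k. k \<le> int M) (v1 x) (v2 x)) \<and>
     (\<forall>x\<in>X. \<forall>y\<in>X. cuts_agree (\<lambda>k. \<bar>k\<bar> \<le> int M) (v1 x - v1 y) (v2 x - v2 y)) \<and>
     (\<forall>x\<in>X. \<forall>y\<in>X.
        (-\<infinity> < v1 x \<and> v1 x \<le> ereal (real M) \<and> -\<infinity> < v1 y \<and> v1 y \<le> ereal (real M)) \<longrightarrow>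
           (efrac (v1 x) \<le> efrac (v1 y) \<longleftrightarrow> efrac (v2 x) \<le> efrac (v2 y)))"
  unfolding approx_val_def cuts_agree_def ..

lemma cuts_agree_refl [simp]: "cuts_agree P a a"
  unfolding cuts_agree_def by blast

lemma cuts_agree_mono: "cuts_agree Q a b \<Longrightarrow> (\<And>k. P k \<Longrightarrow> Q k) \<Longrightarrow> cuts_agree P a b"
  unfolding cuts_agree_def by blast

lemma cuts_agree_ereal_iff:
  "cuts_agree P (ereal a) (ereal b) \<longleftrightarrow>
     (\<forall>k. P k \<longrightarrow> (a < of_int k \<longleftrightarrow> b < of_int k) \<and> (a \<le> of_int k \<longleftrightarrow> b \<le> of_int k))"
  unfolding cuts_agree_def by auto

lemma cuts_agree_infinity:
  assumes "cuts_agree P a b"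
  shows "(a = \<infinity> \<longleftrightarrow> b = \<infinity>) \<and> (a = -\<infinity> \<longleftrightarrow> b = -\<infinity>)"
proof -
  have "a < \<infinity> \<longleftrightarrow> b < \<infinity>" "a \<le> -\<infinity> \<longleftrightarrow> b \<le> -\<infinity>"
    using assms unfolding cuts_agree_def by blast+
  then show ?thesis by (cases a; cases b) auto
qed

lemma cuts_agree_int:
  "cuts_agree P a b \<Longrightarrow> P k \<Longrightarrow>
     (a < ereal (of_int k) \<longleftrightarrow> b < ereal (of_int k)) \<and> (a \<le> ereal (of_int k) \<longleftrightarrow> b \<le> ereal (of_int k))"
  unfolding cuts_agree_def by blast

lemma cuts_agree_upper_if_bounded_below:
  assumes "cuts_agree (\<lambda>k. \<bar>k\<bar> \<le> int N) a b" "M \<le> N" "- ereal (real M) \<le> a"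
  shows "cuts_agree (\<lambda>k. k \<le> int M) a b"
  unfolding cuts_agree_def
proof (intro allI impI)
  fix c assume "c = \<infinity> \<or> c = -\<infinity> \<or> (\<exists>k. c = ereal (of_int k) \<and> k \<le> int M)"
  then consider "c = \<infinity> \<or> c = -\<infinity>" | k where "c = ereal (of_int k)" "- int N \<le> k" "k \<le> int M"
    | k where "c = ereal (of_int k)" "k < - int N"
    by (metis linorder_not_le)
  then show "(a < c \<longleftrightarrow> b < c) \<and> (a \<le> c \<longleftrightarrow> b \<le> c)"
  proof cases
    case 1
    then show ?thesis using assms(1) unfolding cuts_agree_def by blast
  next
    case 2
    then show ?thesis using assms(1,2) cuts_agree_int[of _ a b k] by simp
  next
    case 3
    \<comment> \<open>both a and b lie at or above the cut at -N, hence strictly above c\<close>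
    have "ereal (- real N) \<le> - ereal (real M)" using assms(2) by simp
    then have "ereal (- real N) \<le> a" using assms(3) by (rule order_trans)
    moreover have "ereal (- real N) \<le> b"
      using calculation cuts_agree_int[OF assms(1), of "- int N"] by (simp add: not_less[symmetric])
    moreover have "c < ereal (- real N)" using 3 by simp
    ultimately show ?thesis by (meson leD less_imp_le order.strict_trans2)
  qed
qed

lemma sim_val_cuts_agree:
  "sim_val X M v1 v2 \<Longrightarrow> x \<in> X \<Longrightarrow> cuts_agree (\<lambda>k. \<bar>k\<bar> \<le> int (card X * M)) (v1 x) (v2 x)"
  "sim_val X M v1 v2 \<Longrightarrow> x \<in> X \<Longrightarrow> y \<in> X \<Longrightarrow>
     cuts_agree (\<lambda>k. \<bar>k\<bar> \<le> int ((card X + 1) * M)) (v1 x - v1 y) (v2 x - v2 y)"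
  unfolding sim_val_def sim_K_iff_cuts_agree by blast+

lemma cuts_agree_diff_far:
  fixes a b :: real
  assumes "a < - real M" "b < - real M" "cuts_agree (\<lambda>k. \<bar>k\<bar> \<le> int N) c d" "M \<le> N"
    and "c = -\<infinity> \<or> ereal (real M) < c"
  shows "cuts_agree (\<lambda>k. \<bar>k\<bar> \<le> int M) (ereal a - c) (ereal b - d) \<and>
         cuts_agree (\<lambda>k. \<bar>k\<bar> \<le> int M) (c - ereal a) (d - ereal b)"
proof (cases "c = \<infinity> \<or> c = -\<infinity>")
  case True
  then have "d = c" using cuts_agree_infinity[OF assms(3)] by auto
  then show ?thesis using True by auto
next
  case False
  then obtain c' where c': "c = ereal c'" "real M < c'" using assms(5) by (cases c) auto
  moreover obtain d' where d': "d = ereal d'"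
    using False cuts_agree_infinity[OF assms(3)] by (cases d) auto
  moreover have "\<not> c \<le> ereal (real M)" using c' by simp
  then have "\<not> d \<le> ereal (real M)"
    using cuts_agree_int[OF assms(3), of "int M"] assms(4) by simp
  ultimately have "real M < d'" by simp
  moreover have "- real M \<le> of_int k \<and> of_int k \<le> real M" if "\<bar>k\<bar> \<le> int M" for k :: int
    using that by (simp add: abs_le_iff)
  ultimately show ?thesis
    using c' d' assms(1,2) by (force simp: cuts_agree_ereal_iff)
qed

lemma region_equiv_if_sim_val:
  assumes "sim_val X M v1 v2" "card X \<ge> 1"
  defines "F \<equiv> {x\<in>X. - ereal (real M) \<le> v1 x \<and> v1 x \<le> ereal (real M)}"
  shows "region_equiv F (\<lambda>x. real_of_ereal (v1 x)) (\<lambda>x. real_of_ereal (v2 x))"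
proof -
  define n where "n = card X"
  define r1 where "r1 x = real_of_ereal (v1 x)" for x
  define r2 where "r2 x = real_of_ereal (v2 x)" for x
  have cuts: "cuts_agree (\<lambda>k. \<bar>k\<bar> \<le> int (n * M)) (v1 x) (v2 x)" if "x \<in> X" for x
    using sim_val_cuts_agree(1)[OF assms(1) that] unfolding n_def .
  have finite: "v1 x = ereal (r1 x) \<and> v2 x = ereal (r2 x)" if "x \<in> F" for x
  proof -
    have "x \<in> X" using that unfolding F_def by blast
    then show ?thesis
      using that cuts_agree_infinity[OF cuts[OF \<open>x \<in> X\<close>]] unfolding F_def r1_def r2_def
      by (cases "v1 x"; cases "v2 x") auto
  qed
  have "region_equiv F r1 r2"
  proof (rule region_equiv_if_bounded_cuts)
    show "\<forall>x\<in>F. \<bar>r1 x\<bar> \<le> real M"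
    proof
      fix x assume "x \<in> F"
      then have "- ereal (real M) \<le> v1 x" "v1 x \<le> ereal (real M)" "v1 x = ereal (r1 x)"
        using finite unfolding F_def by blast+
      then show "\<bar>r1 x\<bar> \<le> real M" by simp
    qed
    show "M \<le> n * M" "2 * M \<le> (n + 1) * M"
      using assms(2) unfolding n_def by simp_all
    show "\<forall>x\<in>F. \<forall>k. \<bar>k\<bar> \<le> int (n * M) \<longrightarrow>
        (r1 x < of_int k \<longleftrightarrow> r2 x < of_int k) \<and> (r1 x \<le> of_int k \<longleftrightarrow> r2 x \<le> of_int k)"
    proof (intro ballI allI impI)
      fix x k assume "x \<in> F" "\<bar>k\<bar> \<le> int (n * M)"
      moreover have "cuts_agree (\<lambda>k. \<bar>k\<bar> \<le> int (n * M)) (ereal (r1 x)) (ereal (r2 x))"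
        using cuts[of x] finite[OF \<open>x \<in> F\<close>] \<open>x \<in> F\<close> F_def by simp
      ultimately show "(r1 x < of_int k \<longleftrightarrow> r2 x < of_int k) \<and> (r1 x \<le> of_int k \<longleftrightarrow> r2 x \<le> of_int k)"
        unfolding cuts_agree_ereal_iff by blast
    qed
    show "\<forall>x\<in>F. \<forall>y\<in>F. \<forall>k. \<bar>k\<bar> \<le> int ((n + 1) * M) \<longrightarrow>
        (r1 x - r1 y \<le> of_int k \<longleftrightarrow> r2 x - r2 y \<le> of_int k)"
    proof (intro ballI allI impI)
      fix x y k assume xy: "x \<in> F" "y \<in> F" and k: "\<bar>k\<bar> \<le> int ((n + 1) * M)"
      have "cuts_agree (\<lambda>k. \<bar>k\<bar> \<le> int ((n + 1) * M)) (v1 x - v1 y) (v2 x - v2 y)"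
        using sim_val_cuts_agree(2)[OF assms(1)] xy unfolding n_def F_def by blast
      moreover have "v1 x - v1 y = ereal (r1 x - r1 y)" "v2 x - v2 y = ereal (r2 x - r2 y)"
        using finite[OF xy(1)] finite[OF xy(2)] by simp_all
      ultimately show "r1 x - r1 y \<le> of_int k \<longleftrightarrow> r2 x - r2 y \<le> of_int k"
        using k by (simp add: cuts_agree_ereal_iff)
    qed
  qed
  then show ?thesis unfolding r1_def r2_def .
qed

lemma exists_repair:
  assumes "sim_val X M v1 v2" "card X \<ge> 1"
  obtains q v2' where
    "region_equiv {x\<in>X. -\<infinity> < v1 x \<and> v1 x \<le> ereal (real M)} (\<lambda>x. real_of_ereal (v1 x)) q"
    "\<forall>x\<in>X. -\<infinity> < v1 x \<and> v1 x \<le> ereal (real M) \<longrightarrow> v2' x = ereal (q x)"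
    "\<forall>x\<in>X. v1 x = -\<infinity> \<or> - ereal (real M) \<le> v1 x \<longrightarrow> v2' x = v2 x"
proof -
  define G where "G = {x\<in>X. -\<infinity> < v1 x \<and> v1 x \<le> ereal (real M)}"
  define F where "F = {x\<in>X. - ereal (real M) \<le> v1 x \<and> v1 x \<le> ereal (real M)}"
  have "region_equiv F (\<lambda>x. real_of_ereal (v1 x)) (\<lambda>x. real_of_ereal (v2 x))"
    using region_equiv_if_sim_val assms unfolding F_def by blast
  moreover have "finite G" using assms(2) card.infinite unfolding G_def by fastforce
  moreover have "F \<subseteq> G"
  proof
    fix x assume "x \<in> F"
    then show "x \<in> G" unfolding F_def G_def by (cases "v1 x") auto
  qed
  ultimately obtain q where q: "region_equiv G (\<lambda>x. real_of_ereal (v1 x)) q"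
    "\<forall>x\<in>F. q x = real_of_ereal (v2 x)"
    using region_equiv_extend by blast
  \<comment> \<open>on F this is v2 again, so only the finite values below -M actually change\<close>
  define v2' where "v2' x = (if x \<in> G then ereal (q x) else v2 x)" for x
  have "v2' x = v2 x" if "x \<in> X" "v1 x = -\<infinity> \<or> - ereal (real M) \<le> v1 x" for x
  proof (cases "x \<in> G")
    case True
    then have "x \<in> F" using that unfolding G_def F_def by auto
    moreover have "\<bar>v2 x\<bar> \<noteq> \<infinity>"
      using True cuts_agree_infinity[OF sim_val_cuts_agree(1)[OF assms(1) that(1)]] unfolding G_def
      by (cases "v1 x"; cases "v2 x") auto
    ultimately show ?thesis using True q(2) unfolding v2'_def by (simp add: ereal_real')
  qed (simp add: v2'_def)
  moreover have "\<forall>x\<in>X. -\<infinity> < v1 x \<and> v1 x \<le> ereal (real M) \<longrightarrow> v2' x = ereal (q x)"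
    unfolding v2'_def G_def by simp
  ultimately show thesis using that q(1) unfolding G_def by blast
qed

context
  fixes X :: "'c set" and M :: nat and v1 v2 v2' :: "'c \<Rightarrow> ereal" and q :: "'c \<Rightarrow> real"
  assumes sim: "sim_val X M v1 v2" and card: "1 \<le> card X"
    and region: "region_equiv {x\<in>X. -\<infinity> < v1 x \<and> v1 x \<le> ereal (real M)} (\<lambda>x. real_of_ereal (v1 x)) q"
    and repaired: "\<forall>x\<in>X. -\<infinity> < v1 x \<and> v1 x \<le> ereal (real M) \<longrightarrow> v2' x = ereal (q x)"
    and unchanged: "\<forall>x\<in>X. v1 x = -\<infinity> \<or> - ereal (real M) \<le> v1 x \<longrightarrow> v2' x = v2 x"
begin

lemma inner_repaired:
  assumes "x \<in> X" "-\<infinity> < v1 x" "v1 x \<le> ereal (real M)"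
  obtains a where "v1 x = ereal a" "v2' x = ereal (q x)"
    and "\<And>k. (a < of_int k \<longleftrightarrow> q x < of_int k) \<and> (a \<le> of_int k \<longleftrightarrow> q x \<le> of_int k)"
proof -
  have x: "x \<in> {x\<in>X. -\<infinity> < v1 x \<and> v1 x \<le> ereal (real M)}" using assms by blast
  have "v1 x = ereal (real_of_ereal (v1 x))" using assms(2,3) by (cases "v1 x") auto
  moreover have "v2' x = ereal (q x)" using repaired x by blast
  ultimately show thesis using that region_equiv_cuts[OF region x] by blast
qed

lemma repaired_cuts_agree:
  assumes "x \<in> X"
  shows "cuts_agree (\<lambda>k. k \<le> int M) (v1 x) (v2' x)"
proof (cases "v1 x = -\<infinity> \<or> - ereal (real M) \<le> v1 x")
  case True
  then have "v2' x = v2 x" using unchanged assms by blast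
  moreover have "M \<le> card X * M" using card by simp
  moreover note cuts = sim_val_cuts_agree(1)[OF sim assms]
  ultimately show ?thesis
  proof (cases "v1 x = -\<infinity>")
    case True
    then have "v2' x = v1 x" using cuts_agree_infinity[OF cuts] \<open>v2' x = v2 x\<close> by simp
    then show ?thesis by simp
  next
    case False
    then show ?thesis
      using \<open>v2' x = v2 x\<close> \<open>M \<le> card X * M\<close> \<open>v1 x = -\<infinity> \<or> - ereal (real M) \<le> v1 x\<close>
        cuts_agree_upper_if_bounded_below[OF cuts] by simp
  qed
next
  case False
  then obtain a where "v1 x = ereal a" "v2' x = ereal (q x)"
    "\<And>k. (a < of_int k \<longleftrightarrow> q x < of_int k) \<and> (a \<le> of_int k \<longleftrightarrow> q x \<le> of_int k)"
    using inner_repaired[OF assms, of thesis] by (cases "v1 x") auto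
  then show ?thesis by (simp add: cuts_agree_ereal_iff)
qed

lemma low_repaired:
  assumes "x \<in> X" "-\<infinity> < v1 x" "v1 x < - ereal (real M)"
  shows "v2' x = ereal (q x)" "q x < - real M"
proof -
  have "v1 x \<le> ereal (real M)" using assms(3) by (cases "v1 x") auto
  then obtain a where a: "v1 x = ereal a" "v2' x = ereal (q x)"
    "\<And>k. (a < of_int k \<longleftrightarrow> q x < of_int k) \<and> (a \<le> of_int k \<longleftrightarrow> q x \<le> of_int k)"
    using inner_repaired[OF assms(1,2)] by blast
  have "a < - real M" using a(1) assms(3) by simp
  then show "v2' x = ereal (q x)" "q x < - real M" using a(2) a(3)[of "- int M"] by simp_all
qed

lemma repaired_diff_cuts_agree:
  assumes "x \<in> X" "y \<in> X"
  shows "cuts_agree (\<lambda>k. \<bar>k\<bar> \<le> int M) (v1 x - v1 y) (v2' x - v2' y)"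
proof -
  have far: "cuts_agree (\<lambda>k. \<bar>k\<bar> \<le> int M) (v1 x - v1 y) (v2' x - v2' y) \<and>
             cuts_agree (\<lambda>k. \<bar>k\<bar> \<le> int M) (v1 y - v1 x) (v2' y - v2' x)"
    if xy: "x \<in> X" "y \<in> X" and x_far: "-\<infinity> < v1 x" "v1 x < - ereal (real M)"
      and y_far: "v1 y = -\<infinity> \<or> ereal (real M) < v1 y"
    for x y
  proof -
    obtain a where "v1 x = ereal a" "a < - real M" using x_far by (cases "v1 x") auto
    moreover note low_repaired[OF xy(1) x_far]
    moreover have "v2' y = v2 y" using unchanged xy(2) y_far by (cases "v1 y") auto
    moreover have "M \<le> card X * M" using card by simp
    ultimately show ?thesis
      using cuts_agree_diff_far[OF _ _ sim_val_cuts_agree(1)[OF sim xy(2)] _ y_far] by simp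
  qed
  have split_low: "(v1 z = -\<infinity> \<or> - ereal (real M) \<le> v1 z) \<or> (-\<infinity> < v1 z \<and> v1 z < - ereal (real M))"
    and split_high: "(-\<infinity> < v1 z \<and> v1 z \<le> ereal (real M)) \<or> (v1 z = -\<infinity> \<or> ereal (real M) < v1 z)"
    and low_le: "v1 z < - ereal (real M) \<Longrightarrow> v1 z \<le> ereal (real M)" for z
    by (cases "v1 z"; auto)+
  consider (kept) "v2' x = v2 x" "v2' y = v2 y"
    | (inner) "-\<infinity> < v1 x" "v1 x \<le> ereal (real M)" "-\<infinity> < v1 y" "v1 y \<le> ereal (real M)"
    | (far_x) "-\<infinity> < v1 x" "v1 x < - ereal (real M)" "v1 y = -\<infinity> \<or> ereal (real M) < v1 y"
    | (far_y) "-\<infinity> < v1 y" "v1 y < - ereal (real M)" "v1 x = -\<infinity> \<or> ereal (real M) < v1 x"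
    using unchanged assms split_low[of x] split_low[of y] split_high[of x] split_high[of y]
      low_le[of x] low_le[of y] by blast
  then show ?thesis
  proof cases
    case kept
    have "M \<le> (card X + 1) * M" by simp
    then show ?thesis
      using kept cuts_agree_mono[OF sim_val_cuts_agree(2)[OF sim assms]] by (simp add: order_trans)
  next
    case inner
    obtain a b where "v1 x = ereal a" "v2' x = ereal (q x)" "v1 y = ereal b" "v2' y = ereal (q y)"
      using inner_repaired[of x] inner_repaired[of y] assms inner by metis
    moreover have "x \<in> {x\<in>X. -\<infinity> < v1 x \<and> v1 x \<le> ereal (real M)}"
      "y \<in> {x\<in>X. -\<infinity> < v1 x \<and> v1 x \<le> ereal (real M)}"
      using assms inner by auto
    note region_equiv_diff_cuts[OF region this]
    ultimately show ?thesis by (simp add: cuts_agree_ereal_iff)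
  next
    case far_x
    then show ?thesis using far[OF assms] by blast
  next
    case far_y
    then show ?thesis using far[OF assms(2,1)] by blast
  qed
qed

lemma repaired_frac_order:
  assumes "x \<in> X" "y \<in> X" "-\<infinity> < v1 x" "v1 x \<le> ereal (real M)" "-\<infinity> < v1 y" "v1 y \<le> ereal (real M)"
  shows "efrac (v1 x) \<le> efrac (v1 y) \<longleftrightarrow> efrac (v2' x) \<le> efrac (v2' y)"
  using region repaired assms unfolding region_equiv_def efrac_def by auto

lemma is_valuation_repaired:
  assumes "X = XF \<union> XH" "is_valuation XF XH v1" "is_valuation XF XH v2"
  shows "is_valuation XF XH v2'"
  unfolding is_valuation_def
proof (intro conjI ballI)
  fix x assume x: "x \<in> XH"
  then have "0 \<le> v1 x" "0 \<le> v2 x" using assms(2,3) unfolding is_valuation_def by auto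
  moreover from this(1) have "- ereal (real M) \<le> v1 x" by (rule order_trans[rotated]) simp
  ultimately show "0 \<le> v2' x" using unchanged x assms(1) by simp
next
  fix x assume x: "x \<in> XF"
  show "v2' x \<le> 0"
  proof (cases "v1 x = -\<infinity> \<or> - ereal (real M) \<le> v1 x")
    case True
    then have "v2' x = v2 x" using unchanged x assms(1) by blast
    then show ?thesis using assms(3) x unfolding is_valuation_def by simp
  next
    case False
    then have "-\<infinity> < v1 x" "v1 x < - ereal (real M)" by (auto simp: not_le)
    then show ?thesis using low_repaired[of x] x assms(1) by simp
  qed
qed

lemma approx_val_repaired: "approx_val X M v1 v2'"
  unfolding approx_val_iff_cuts_agree
  using repaired_cuts_agree repaired_diff_cuts_agree repaired_frac_order by blast

end

theorem lemma10:
  fixes XF XH :: "'c set" and M :: nat and v1 v2 :: "'c \<Rightarrow> ereal"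
  assumes "finite (XF \<union> XH)" and "XF \<inter> XH = {}" and "card (XF \<union> XH) \<ge> 1"
    and "is_valuation XF XH v1" and "is_valuation XF XH v2"
    and "sim_val (XF \<union> XH) M v1 v2"
  shows "\<exists>v2'. is_valuation XF XH v2' \<and>
           (\<forall>x\<in>{x\<in>XF \<union> XH. - ereal (real M) \<le> v1 x}. v2' x = v2 x) \<and>
           approx_val (XF \<union> XH) M v1 v2'"
proof -
  define X where "X = XF \<union> XH"
  have sim: "sim_val X M v1 v2" and card: "1 \<le> card X" using assms(3,6) unfolding X_def by simp_all
  obtain q v2' where repair:
    "region_equiv {x\<in>X. -\<infinity> < v1 x \<and> v1 x \<le> ereal (real M)} (\<lambda>x. real_of_ereal (v1 x)) q"
    "\<forall>x\<in>X. -\<infinity> < v1 x \<and> v1 x \<le> ereal (real M) \<longrightarrow> v2' x = ereal (q x)"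
    "\<forall>x\<in>X. v1 x = -\<infinity> \<or> - ereal (real M) \<le> v1 x \<longrightarrow> v2' x = v2 x"
    using exists_repair[OF sim card] by blast
  have "is_valuation XF XH v2'"
    using is_valuation_repaired[OF sim card repair X_def assms(4,5)] .
  moreover have "approx_val X M v1 v2'"
    using approx_val_repaired[OF sim card repair] .
  moreover have "\<forall>x\<in>{x\<in>X. - ereal (real M) \<le> v1 x}. v2' x = v2 x"
    using repair(3) by blast
  ultimately show ?thesis unfolding X_def by blast
qed

end
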